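(* Let $\bar u=\langle F_i\mid i<\omega\rangle$, with maps $f^m_n\in\ddagger\mathcal{F}_P(F_m,F_n)$, be a Fraïssé sequence for the category $\ddagger\mathcal{F}_P$, and let $(\mathbb F,E)$ be its limit. Then $E\subseteq\mathrm{End}(\mathbb F)$ and $E$ is dense in $\mathbb F$.
   Context: Fix $P\subseteq\{3,4,\ldots,\infty\}$. A finite tree is viewed as a graph with reflexive symmetric edge relation $R$. For finite trees $A,B$, a monotone epimorphism $f\colon B\to A$ (edges map onto edges and preimages of connected sets are connected) is weakly coherent at a vertex $a\in A$ with $\mathrm{ord}(a)=n\geq 3$ if there is $b\in f^{-1}(a)$ (the witness) with $\mathrm{ord}(b)\geq n$ such that the preimages under $f$ of the $n$ distinct connected components of $A\setminus\{a\}$ lie in $n$ distinct connected components of $B\setminus\{b\}$; $f$ is weakly coherent if this holds at every $a$ with $\mathrm{ord}(a)\geq3$. The category $\ddagger\mathcal{F}_P$: objects are finite trees $A$ having at least one ramification point, in which every vertex is an endpoint or a ramification point, each ramification point $a$ carries exactly one label $p\in P$ (unary predicate $U_p(a)$) with $\mathrm{ord}(a)\leq p$, and endpoints carry no label. An arrow $f\in\ddagger\mathcal{F}_P(B,A)$ is a pair $(p(f),e(f))$ where $p(f)\colon B\to A$ is a weakly coherent epimorphism of trees such that whenever $U_p(a)$ holds and $b$ witnesses the weak coherence of $p(f)$ at $a$, then $U_p(b)$ holds; and $e(f)\colon\mathrm{End}(A)\to\mathrm{End}(B)$ is a map with $p(f)\circ e(f)=\mathrm{Id}_{\mathrm{End}(A)}$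 (here $\mathrm{End}(X)$ is the set of endpoints). Composition is $f\circ g=(p(f)\circ p(g),e(g)\circ e(f))$. A Fraïssé sequence for $\ddagger\mathcal{F}_P$ is a sequence $\langle F_n\rangle$ with arrows $f^m_n\in\ddagger\mathcal{F}_P(F_m,F_n)$ such that (1) for every object $X$ there is $n$ with $\ddagger\mathcal{F}_P(F_n,X)\neq\varnothing$, and (2) for every $n$ and every arrow $f\in\ddagger\mathcal{F}_P(Y,F_n)$ there exist $m\geq n$ and $g\in\ddagger\mathcal{F}_P(F_m,Y)$ with $f\circ g=f^m_n$. The limit of such a sequence is the pair $(\mathbb F,E)$, where $\mathbb F\subseteq\prod_i F_i$ is the inverse limit (as a topological graph, with product topology of discrete spaces) of the projections $p(f^{m}_n)$, with canonical projections $f_m\colon\mathbb F\to F_m$, and $E$ is the direct limit of the embedding parts $e(f^m_n)$, i.e. the countable set of points of $\mathbb F$ determined by sequences of the form $(p(f^m_0)(y),\ldots,p(f^m_{m-1})(y),y,e(f^{m+1}_m)(y),e(f^{m+2}_m)(y),\ldots)$ for $y\in\mathrm{End}(F_m)$. An endpoint of a topological graph $G$ is a vertex $x$ such that whenever an arc is embedded in $G$ through $x$, $x$ is the image of an endpoint of the arc. *)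

theory Defs
  imports "HOL-Analysis.Analysis" "HOL-Library.Extended_Nat"
begin

text \<open>A finite graph with vertices in nat: vertex set, reflexive symmetric edge
relation, and a label function (Some p means that U_p holds, None means no label).\<close>

record ltree =
  V   :: "nat set"
  R   :: "nat \<Rightarrow> nat \<Rightarrow> bool"
  lab :: "nat \<Rightarrow> enat option"

definition restr :: "ltree \<Rightarrow> nat set \<Rightarrow> nat \<Rightarrow> nat \<Rightarrow> bool" where
  "restr G S = (\<lambda>a b. a \<in> S \<and> b \<in> S \<and> R G a b)"

definition conn_set :: "ltree \<Rightarrow> nat set \<Rightarrow> bool" where
  "conn_set G S \<longleftrightarrow> S \<subseteq> V G \<and> (\<forall>x\<in>S. \<forall>y\<in>S. (restr G S)\<^sup>*\<^sup>* x y)"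

definition is_tree :: "ltree \<Rightarrow> bool" where
  "is_tree G \<longleftrightarrow> finite (V G) \<and> V G \<noteq> {}
     \<and> (\<forall>x y. R G x y \<longrightarrow> x \<in> V G \<and> y \<in> V G)
     \<and> (\<forall>x\<in>V G. R G x x)
     \<and> (\<forall>x y. R G x y \<longrightarrow> R G y x)
     \<and> conn_set G (V G)
     \<and> \<not> (\<exists>cs. 3 \<le> length cs \<and> distinct cs \<and> set cs \<subseteq> V G
            \<and> (\<forall>i < length cs. R G (cs ! i) (cs ! ((i + 1) mod length cs))))"

definition ord :: "ltree \<Rightarrow> nat \<Rightarrow> nat" where
  "ord G a = card {y \<in> V G. y \<noteq> a \<and> R G a y}"

definition Ends :: "ltree \<Rightarrow> nat set" where
  "Ends G = {a \<in> V G. ord G a = 1}"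

definition comps :: "ltree \<Rightarrow> nat \<Rightarrow> nat set set" where
  "comps G a = {C. \<exists>x \<in> V G - {a}. C = {y \<in> V G - {a}. (restr G (V G - {a}))\<^sup>*\<^sup>* x y}}"

definition preim :: "ltree \<Rightarrow> (nat \<Rightarrow> nat) \<Rightarrow> nat set \<Rightarrow> nat set" where
  "preim B f S = {x \<in> V B. f x \<in> S}"

definition epi :: "ltree \<Rightarrow> ltree \<Rightarrow> (nat \<Rightarrow> nat) \<Rightarrow> bool" where
  "epi B A f \<longleftrightarrow> (\<forall>x\<in>V B. f x \<in> V A)
     \<and> (\<forall>x y. R B x y \<longrightarrow> R A (f x) (f y))
     \<and> (\<forall>a a'. R A a a' \<longrightarrow> (\<exists>b b'. R B b b' \<and> f b = a \<and> f b' = a'))"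

definition mono_epi :: "ltree \<Rightarrow> ltree \<Rightarrow> (nat \<Rightarrow> nat) \<Rightarrow> bool" where
  "mono_epi B A f \<longleftrightarrow> epi B A f \<and> (\<forall>S. conn_set A S \<longrightarrow> conn_set B (preim B f S))"

definition wc_witness :: "ltree \<Rightarrow> ltree \<Rightarrow> (nat \<Rightarrow> nat) \<Rightarrow> nat \<Rightarrow> nat \<Rightarrow> bool" where
  "wc_witness B A f a b \<longleftrightarrow> b \<in> V B \<and> f b = a \<and> ord A a \<le> ord B b
     \<and> (\<exists>\<phi>. inj_on \<phi> (comps A a)
          \<and> (\<forall>C\<in>comps A a. \<phi> C \<in> comps B b \<and> preim B f C \<subseteq> \<phi> C))"

definition weakly_coherent :: "ltree \<Rightarrow> ltree \<Rightarrow> (nat \<Rightarrow> nat) \<Rightarrow> bool" where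
  "weakly_coherent B A f \<longleftrightarrow> mono_epi B A f
     \<and> (\<forall>a\<in>V A. 3 \<le> ord A a \<longrightarrow> (\<exists>b. wc_witness B A f a b))"

definition is_obj :: "enat set \<Rightarrow> ltree \<Rightarrow> bool" where
  "is_obj P A \<longleftrightarrow> is_tree A
     \<and> (\<exists>a\<in>V A. 3 \<le> ord A a)
     \<and> (\<forall>a\<in>V A. ord A a = 1 \<or> 3 \<le> ord A a)
     \<and> (\<forall>a\<in>V A. 3 \<le> ord A a \<longrightarrow> (\<exists>p\<in>P. lab A a = Some p \<and> enat (ord A a) \<le> p))
     \<and> (\<forall>a\<in>V A. ord A a = 1 \<longrightarrow> lab A a = None)"

record arrow =
  pm :: "nat \<Rightarrow> nat"
  em :: "nat \<Rightarrow> nat"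

definition is_arrow :: "enat set \<Rightarrow> ltree \<Rightarrow> ltree \<Rightarrow> arrow \<Rightarrow> bool" where
  "is_arrow P B A f \<longleftrightarrow> weakly_coherent B A (pm f)
     \<and> (\<forall>a\<in>V A. \<forall>b p. lab A a = Some p \<and> wc_witness B A (pm f) a b \<longrightarrow> lab B b = Some p)
     \<and> (\<forall>y\<in>Ends A. em f y \<in> Ends B \<and> pm f (em f y) = y)"

definition comp :: "arrow \<Rightarrow> arrow \<Rightarrow> arrow" where
  "comp f g = \<lparr>pm = pm f \<circ> pm g, em = em g \<circ> em f\<rparr>"

definition id_arrow :: arrow where
  "id_arrow = \<lparr>pm = id, em = id\<rparr>"

text \<open>Equality of arrows in the hom-set from B to A (as maps on the relevant carriers).\<close>
definition arr_eq :: "ltree \<Rightarrow> ltree \<Rightarrow> arrow \<Rightarrow> arrow \<Rightarrow> bool" where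
  "arr_eq B A f g \<longleftrightarrow> (\<forall>x\<in>V B. pm f x = pm g x) \<and> (\<forall>y\<in>Ends A. em f y = em g y)"

definition fraisse_seq :: "enat set \<Rightarrow> (nat \<Rightarrow> ltree) \<Rightarrow> (nat \<Rightarrow> nat \<Rightarrow> arrow) \<Rightarrow> bool" where
  "fraisse_seq P F f \<longleftrightarrow>
     (\<forall>n. is_obj P (F n))
   \<and> (\<forall>n m. n \<le> m \<longrightarrow> is_arrow P (F m) (F n) (f m n))
   \<and> (\<forall>n. arr_eq (F n) (F n) (f n n) id_arrow)
   \<and> (\<forall>n m k. n \<le> m \<and> m \<le> k \<longrightarrow> arr_eq (F k) (F n) (f k n) (comp (f m n) (f k m)))
   \<and> (\<forall>X. is_obj P X \<longrightarrow> (\<exists>n g. is_arrow P (F n) X g))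
   \<and> (\<forall>n Y g. is_obj P Y \<and> is_arrow P Y (F n) g \<longrightarrow>
        (\<exists>m\<ge>n. \<exists>h. is_arrow P (F m) Y h \<and> arr_eq (F m) (F n) (comp g h) (f m n)))"

definition Flim :: "(nat \<Rightarrow> ltree) \<Rightarrow> (nat \<Rightarrow> nat \<Rightarrow> arrow) \<Rightarrow> (nat \<Rightarrow> nat) set" where
  "Flim F f = {x. \<forall>i. x i \<in> V (F i) \<and> pm (f (Suc i) i) (x (Suc i)) = x i}"

definition Rlim :: "(nat \<Rightarrow> ltree) \<Rightarrow> (nat \<Rightarrow> nat) \<Rightarrow> (nat \<Rightarrow> nat) \<Rightarrow> bool" where
  "Rlim F x y \<longleftrightarrow> (\<forall>i. R (F i) (x i) (y i))"

definition Ftop :: "(nat \<Rightarrow> ltree) \<Rightarrow> (nat \<Rightarrow> nat \<Rightarrow> arrow) \<Rightarrow> (nat \<Rightarrow> nat) topology" where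
  "Ftop F f = subtopology (product_topology (\<lambda>i. discrete_topology (V (F i))) UNIV) (Flim F f)"

definition Elim :: "(nat \<Rightarrow> ltree) \<Rightarrow> (nat \<Rightarrow> nat \<Rightarrow> arrow) \<Rightarrow> (nat \<Rightarrow> nat) set" where
  "Elim F f = {x. \<exists>m. \<exists>y\<in>Ends (F m).
      x = (\<lambda>i. if i < m then pm (f m i) y else if i = m then y else em (f i m) y)}"

definition tg_connected :: "'a topology \<Rightarrow> ('a \<Rightarrow> 'a \<Rightarrow> bool) \<Rightarrow> 'a set \<Rightarrow> bool" where
  "tg_connected T Rel S \<longleftrightarrow> \<not> (\<exists>P Q. P \<noteq> {} \<and> Q \<noteq> {} \<and> P \<inter> Q = {} \<and> P \<union> Q = S
      \<and> closedin (subtopology T S) P \<and> closedin (subtopology T S) Q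
      \<and> (\<forall>x\<in>P. \<forall>y\<in>Q. \<not> Rel x y))"

definition tg_cut :: "'a topology \<Rightarrow> ('a \<Rightarrow> 'a \<Rightarrow> bool) \<Rightarrow> 'a set \<Rightarrow> 'a \<Rightarrow> bool" where
  "tg_cut T Rel S x \<longleftrightarrow> x \<in> S \<and> \<not> tg_connected T Rel (S - {x})"

definition tg_arc :: "'a topology \<Rightarrow> ('a \<Rightarrow> 'a \<Rightarrow> bool) \<Rightarrow> 'a set \<Rightarrow> bool" where
  "tg_arc T Rel S \<longleftrightarrow> S \<subseteq> topspace T \<and> compactin T S \<and> tg_connected T Rel S
     \<and> (\<exists>a b. a \<noteq> b \<and> {x \<in> S. \<not> tg_cut T Rel S x} = {a, b})"

definition tg_endpoint :: "'a topology \<Rightarrow> ('a \<Rightarrow> 'a \<Rightarrow> bool) \<Rightarrow> 'a \<Rightarrow> bool" where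
  "tg_endpoint T Rel x \<longleftrightarrow> x \<in> topspace T
     \<and> (\<forall>S. tg_arc T Rel S \<and> x \<in> S \<longrightarrow> \<not> tg_cut T Rel S x)"

end

theory Submission
  imports Defs
begin

(* If x is the thread of an endpoint y of F_m, then for k >= m the coordinate x_k is an endpoint
   of F_k, and the clopen set of threads through x_k is left by edges of the limit graph at a
   single point: the preimages of x_k and of its neighbour under the monotone map F_l -> F_k are
   disjoint subtrees of the tree F_l, hence joined by at most one edge. Clopen sets of this kind
   around x that miss any two given points show that removing x cannot disconnect a connected set.

   Density amounts to every vertex v of F_k being the image of an endpoint of some F_m. For a
   ramification point v, subdivide an edge at v by a new ramification point w carrying the label
   of v and hang a new endpoint e on w; collapsing w and e onto v is an arrow Y -> F_k, and the
   Fraisse property factors f^m_k through it, so the endpoint of F_m chosen over e projects to v. *)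

section \<open>Paths and cycles in finite trees\<close>

lemma is_tree_symp: "is_tree G \<Longrightarrow> symp (R G)"
  unfolding is_tree_def symp_def by blast

lemma is_tree_edge_in_V: "is_tree G \<Longrightarrow> R G a b \<Longrightarrow> a \<in> V G \<and> b \<in> V G"
  unfolding is_tree_def by blast

lemma symp_restr: "symp (R G) \<Longrightarrow> symp (restr G S)"
  unfolding symp_def restr_def by blast

lemma restr_rtranclp_mono:
  assumes "S \<subseteq> S'" "(restr G S)\<^sup>*\<^sup>* x y"
  shows "(restr G S')\<^sup>*\<^sup>* x y"
proof -
  have "restr G S \<le> restr G S'" using assms(1) unfolding restr_def by auto
  from predicate2D[OF rtranclp_mono[OF this] assms(2)] show ?thesis .
qed

lemma restr_rtranclp_hom:
  assumes hom: "\<And>x y. R H x y \<Longrightarrow> R G (r x) (r y)" and into: "r ` S \<subseteq> S'"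
    and path: "(restr H S)\<^sup>*\<^sup>* x y"
  shows "(restr G S')\<^sup>*\<^sup>* (r x) (r y)"
  using path
proof (induction rule: rtranclp_induct)
  case (step y z)
  then have "restr G S' (r y) (r z)" using hom into unfolding restr_def by auto
  with step.IH show ?case by (rule rtranclp.rtrancl_into_rtrancl)
qed simp

lemma restr_rtranclp_simple_path:
  assumes "(restr G S)\<^sup>*\<^sup>* x y" "x \<in> S"
  shows "\<exists>ps. ps \<noteq> [] \<and> hd ps = x \<and> last ps = y \<and> distinct ps \<and> set ps \<subseteq> S
    \<and> successively (R G) ps"
  using assms(1)
proof (induction rule: rtranclp_induct)
  case base then show ?case using assms(2) by (intro exI[of _ "[x]"]) auto
next
  case (step y z)
  then obtain ps where ps: "ps \<noteq> []" "hd ps = x" "last ps = y" "distinct ps" "set ps \<subseteq> S"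
      "successively (R G) ps" by blast
  from step(2) have z: "z \<in> S" "R G y z" by (auto simp: restr_def)
  show ?case
  proof (cases "z \<in> set ps")
    case True
    then obtain as bs where split: "ps = (as @ [z]) @ bs"
      by (metis append_Cons append_Nil append_assoc split_list)
    have "hd (as @ [z]) = x" using ps(1,2) split by (cases as) auto
    moreover have "successively (R G) (as @ [z])" using ps(6) split
      by (simp only: successively_append_iff)
    ultimately show ?thesis using ps split by (intro exI[of _ "as @ [z]"]) auto
  next
    case False
    have "successively (R G) (ps @ [z])" using ps z by (simp add: successively_append_iff)
    then show ?thesis using ps z False by (intro exI[of _ "ps @ [z]"]) auto
  qed
qed

definition is_cycle :: "('a \<Rightarrow> 'a \<Rightarrow> bool) \<Rightarrow> 'a list \<Rightarrow> bool" where
  "is_cycle r cs \<longleftrightarrow> 3 \<le> length cs \<and> distinct cs \<and> successively r cs \<and> r (last cs) (hd cs)"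

lemma cyclically_adjacent_iff:
  assumes ne: "cs \<noteq> []"
  shows "(\<forall>i<length cs. r (cs ! i) (cs ! ((i + 1) mod length cs)))
      \<longleftrightarrow> (\<forall>i. Suc i < length cs \<longrightarrow> r (cs ! i) (cs ! Suc i)) \<and> r (cs ! (length cs - 1)) (cs ! 0)"
proof -
  let ?n = "length cs"
  have idx: "i < ?n \<longleftrightarrow> Suc i < ?n \<or> i = ?n - 1" for i using ne by auto
  show ?thesis
  proof (intro iffI conjI allI impI)
    fix i assume adj: "\<forall>i<?n. r (cs ! i) (cs ! ((i + 1) mod ?n))" and i: "Suc i < ?n"
    show "r (cs ! i) (cs ! Suc i)" using adj[rule_format, of i] i by simp
  next
    assume adj: "\<forall>i<?n. r (cs ! i) (cs ! ((i + 1) mod ?n))"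
    show "r (cs ! (?n - 1)) (cs ! 0)" using adj[rule_format, of "?n - 1"] ne by (simp add: Suc_diff_1)
  next
    fix i assume "(\<forall>i. Suc i < ?n \<longrightarrow> r (cs ! i) (cs ! Suc i)) \<and> r (cs ! (?n - 1)) (cs ! 0)" "i < ?n"
    then show "r (cs ! i) (cs ! ((i + 1) mod ?n))" using idx[of i] ne by (auto simp: Suc_diff_1)
  qed
qed

lemma is_cycle_iff_cyclically_adjacent:
  "is_cycle r cs \<longleftrightarrow> 3 \<le> length cs \<and> distinct cs
     \<and> (\<forall>i<length cs. r (cs ! i) (cs ! ((i + 1) mod length cs)))"
proof (cases "cs = []")
  case False
  then show ?thesis
    unfolding cyclically_adjacent_iff[OF False] is_cycle_def successively_conv_nth
    by (simp add: last_conv_nth hd_conv_nth)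
qed (simp add: is_cycle_def)

lemma is_tree_no_cycle: "is_tree G \<Longrightarrow> set cs \<subseteq> V G \<Longrightarrow> \<not> is_cycle (R G) cs"
  unfolding is_tree_def is_cycle_iff_cyclically_adjacent by blast

lemma is_cycle_Cons:
  "is_cycle r (x # ps) \<longleftrightarrow> 2 \<le> length ps \<and> x \<notin> set ps \<and> distinct ps
     \<and> r x (hd ps) \<and> successively r ps \<and> r (last ps) x"
  by (cases ps) (auto simp: is_cycle_def successively_Cons)

lemma is_cycle_Cons_hd_neq_last: "is_cycle r (x # ps) \<Longrightarrow> hd ps \<noteq> last ps"
  by (cases ps) (auto simp: is_cycle_Cons)

lemma is_cycle_rotate1:
  assumes "is_cycle r cs"
  shows "is_cycle r (rotate1 cs)"
proof (cases cs)
  case (Cons x ps)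
  with assms have "is_cycle r (x # ps)" by simp
  then have "ps \<noteq> []" "x \<notin> set ps" "distinct ps" "r x (hd ps)" "successively r ps" "r (last ps) x"
    "2 \<le> length ps"
    unfolding is_cycle_Cons by auto
  then show ?thesis using Cons unfolding is_cycle_def by (auto simp: successively_append_iff)
qed (use assms in \<open>simp add: is_cycle_def\<close>)

lemma is_cycle_rotate: "is_cycle r cs \<Longrightarrow> is_cycle r (rotate n cs)"
  by (induction n) (simp_all add: is_cycle_rotate1)

lemma is_cycle_through:
  assumes cyc: "is_cycle r cs" and x: "x \<in> set cs"
  obtains ps where "is_cycle r (x # ps)" "set (x # ps) = set cs"
proof -
  obtain j where j: "j < length cs" "cs ! j = x" using x by (meson in_set_conv_nth)
  then have "cs \<noteq> []" by auto
  then have ne: "rotate j cs \<noteq> []" and hd: "hd (rotate j cs) = x"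
    using hd_rotate_conv_nth[of cs j] j by auto
  have rot: "x # tl (rotate j cs) = rotate j cs"
    using list.collapse[OF ne] unfolding hd .
  show thesis
  proof (rule that)
    show "is_cycle r (x # tl (rotate j cs))" unfolding rot by (rule is_cycle_rotate[OF cyc])
    show "set (x # tl (rotate j cs)) = set cs" unfolding rot by simp
  qed
qed

lemma tree_cross_edge_unique:
  assumes T: "is_tree G" and cA: "conn_set G A" and cB: "conn_set G B" and AB: "A \<inter> B = {}"
    and "a \<in> A" "a' \<in> A" "b \<in> B" "b' \<in> B" "R G a b" "R G a' b'"
  shows "b = b'"
proof (rule ccontr)
  assume ne: "b \<noteq> b'"
  obtain pa where pa: "pa \<noteq> []" "hd pa = a" "last pa = a'" "distinct pa" "set pa \<subseteq> A"
      "successively (R G) pa"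
    using restr_rtranclp_simple_path[of G A a a'] cA assms(5,6) unfolding conn_set_def by blast
  obtain pb where pb: "pb \<noteq> []" "hd pb = b'" "last pb = b" "distinct pb" "set pb \<subseteq> B"
      "successively (R G) pb"
    using restr_rtranclp_simple_path[of G B b' b] cB assms(7,8) unfolding conn_set_def by blast
  have "tl pb \<noteq> []" using pb(1-3) ne by (cases pb) auto
  then have "Suc 0 < length pb" by (cases pb) auto
  then have "3 \<le> length (pa @ pb)" using pa(1) by (cases pa) auto
  moreover have "distinct (pa @ pb)" using pa(4,5) pb(4,5) AB by auto
  moreover have "successively (R G) (pa @ pb)"
    using pa(1,3,6) pb(1,2,6) assms(10) by (simp add: successively_append_iff)
  moreover have "R G (last (pa @ pb)) (hd (pa @ pb))"
    using pa(1,2) pb(1,3) sympD[OF is_tree_symp[OF T] assms(9)] by simp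
  ultimately have "is_cycle (R G) (pa @ pb)" unfolding is_cycle_def by blast
  moreover have "set (pa @ pb) \<subseteq> V G" using pa(5) pb(5) cA cB unfolding conn_set_def by auto
  ultimately show False using is_tree_no_cycle[OF T] by blast
qed

definition nbrs :: "ltree \<Rightarrow> nat \<Rightarrow> nat set" where
  "nbrs G a = {y \<in> V G. y \<noteq> a \<and> R G a y}"

lemma ord_eq_card_nbrs: "ord G a = card (nbrs G a)"
  unfolding ord_def nbrs_def by simp

lemma Ends_V: "Ends G \<subseteq> V G"
  unfolding Ends_def by auto

lemma Ends_neighbour_unique:
  assumes "is_tree G" "t \<in> Ends G" "R G t a" "R G t b" "a \<noteq> t" "b \<noteq> t"
  shows "a = b"
proof -
  obtain z where "nbrs G t = {z}"
    using assms(2) card_1_singletonE unfolding Ends_def ord_eq_card_nbrs by blast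
  moreover have "a \<in> nbrs G t" "b \<in> nbrs G t"
    using assms is_tree_edge_in_V unfolding nbrs_def by blast+
  ultimately show ?thesis by simp
qed

definition cut_component :: "ltree \<Rightarrow> nat \<Rightarrow> nat \<Rightarrow> nat set" where
  "cut_component G a x = {y \<in> V G - {a}. (restr G (V G - {a}))\<^sup>*\<^sup>* x y}"

lemma comps_eq_cut_components: "comps G a = cut_component G a ` (V G - {a})"
  unfolding comps_def cut_component_def by blast

lemma cut_component_self: "x \<in> V G - {a} \<Longrightarrow> x \<in> cut_component G a x"
  unfolding cut_component_def by simp

lemma cut_component_eq:
  assumes "symp (R G)" "y \<in> cut_component G a x"
  shows "cut_component G a y = cut_component G a x"
proof -
  have "(restr G (V G - {a}))\<^sup>*\<^sup>* x y" using assms(2) unfolding cut_component_def by simp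
  moreover have "(restr G (V G - {a}))\<^sup>*\<^sup>* y x"
    using calculation sympD[OF symp_rtranclp[OF symp_restr[OF assms(1)]]] by blast
  ultimately show ?thesis unfolding cut_component_def by (auto intro: rtranclp_trans)
qed

lemma conn_set_subset_cut_component:
  "conn_set G S \<Longrightarrow> S \<subseteq> V G - {a} \<Longrightarrow> x \<in> S \<Longrightarrow> S \<subseteq> cut_component G a x"
  unfolding conn_set_def cut_component_def using restr_rtranclp_mono by blast

lemma conn_set_cut_component:
  assumes symp: "symp (R G)" and x: "x \<in> V G - {a}"
  shows "conn_set G (cut_component G a x)"
proof -
  let ?C = "cut_component G a x"
  have from_x: "(restr G ?C)\<^sup>*\<^sup>* x y" if "(restr G (V G - {a}))\<^sup>*\<^sup>* x y" for y
    using that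
  proof (induction rule: rtranclp_induct)
    case (step y z)
    then have "restr G ?C y z" unfolding restr_def cut_component_def
      by (auto intro: rtranclp.rtrancl_into_rtrancl)
    with step.IH show ?case by (rule rtranclp.rtrancl_into_rtrancl)
  qed simp
  have "(restr G ?C)\<^sup>*\<^sup>* y z" if "y \<in> ?C" "z \<in> ?C" for y z
    using from_x that sympD[OF symp_rtranclp[OF symp_restr[OF symp]]]
    unfolding cut_component_def by (blast intro: rtranclp_trans)
  then show ?thesis unfolding conn_set_def cut_component_def by blast
qed

lemma comps_nonempty: "C \<in> comps G a \<Longrightarrow> C \<noteq> {}"
  unfolding comps_eq_cut_components using cut_component_self by blast

lemma comps_cut_component_member:
  assumes "symp (R G)" "C \<in> comps G a" "x \<in> C"
  shows "x \<in> V G - {a}" "C = cut_component G a x"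
proof -
  obtain x0 where x0: "x0 \<in> V G - {a}" "C = cut_component G a x0"
    using assms(2) unfolding comps_eq_cut_components by blast
  then show "x \<in> V G - {a}" using assms(3) unfolding cut_component_def by auto
  show "C = cut_component G a x" using cut_component_eq[OF assms(1), of x a x0] assms(3) x0(2) by simp
qed

section \<open>Removing a point from a connected topological graph\<close>

definition single_exit :: "('a \<Rightarrow> 'a \<Rightarrow> bool) \<Rightarrow> 'a set \<Rightarrow> 'a set \<Rightarrow> bool" where
  "single_exit Rel S U \<longleftrightarrow>
     (\<forall>u\<in>S \<inter> U. \<forall>u'\<in>S \<inter> U. \<forall>z\<in>S - U. \<forall>z'\<in>S - U. Rel u z \<longrightarrow> Rel u' z' \<longrightarrow> z = z')"

lemma tg_connected_edge_across:
  assumes "tg_connected T Rel S" "A \<subseteq> S" "A \<noteq> {}" "S - A \<noteq> {}"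
    "closedin (subtopology T S) A" "closedin (subtopology T S) (S - A)"
  obtains a b where "a \<in> A" "b \<in> S - A" "Rel a b"
proof -
  have "\<exists>a\<in>A. \<exists>b\<in>S - A. Rel a b"
  proof (rule ccontr)
    assume "\<not> (\<exists>a\<in>A. \<exists>b\<in>S - A. Rel a b)"
    then have "\<exists>P Q. P \<noteq> {} \<and> Q \<noteq> {} \<and> P \<inter> Q = {} \<and> P \<union> Q = S
        \<and> closedin (subtopology T S) P \<and> closedin (subtopology T S) Q \<and> (\<forall>x\<in>P. \<forall>y\<in>Q. \<not> Rel x y)"
      using assms(2-6) by (intro exI[of _ A] exI[of _ "S - A"]) auto
    then show False using notE[OF assms(1)[unfolded tg_connected_def]] by simp
  qed
  then show thesis using that by blast
qed

lemma separation_side_contains_exit: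
  assumes symp: "symp Rel" and conn: "tg_connected T Rel S" and x: "x \<in> S"
    and S: "S \<subseteq> topspace T" and U: "openin T U" "closedin T U" "x \<in> U"
    and exit: "single_exit Rel S U" and uz: "u \<in> S \<inter> U" "z \<in> S - U" "Rel u z"
    and cover: "P \<union> Q = S - {x}" "P \<inter> Q = {}"
    and clP: "closedin (subtopology T (S - {x})) P" and clQ: "closedin (subtopology T (S - {x})) Q"
    and apart: "\<forall>a\<in>Q. \<forall>b\<in>P. \<not> Rel a b" and q: "q \<in> Q" "q \<notin> U"
  shows "z \<in> Q"
proof (rule ccontr)
  assume z: "z \<notin> Q"
  obtain D D' where D: "closedin T D" "Q = D \<inter> (S - {x})"
    and D': "closedin T D'" "P = D' \<inter> (S - {x})"
    using clP clQ unfolding closedin_subtopology by blast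
  have "Q - U = (D \<inter> (topspace T - U)) \<inter> S" using D(2) S U(3) by auto
  moreover have "closedin T (D \<inter> (topspace T - U))" using D(1) U(1) by auto
  ultimately have clA: "closedin (subtopology T S) (Q - U)"
    unfolding closedin_subtopology by blast
  have "S - (Q - U) = (D' \<union> U) \<inter> S" using cover D' U(3) x by auto
  moreover have "closedin T (D' \<union> U)" using D'(1) U(2) by auto
  ultimately have clB: "closedin (subtopology T S) (S - (Q - U))"
    unfolding closedin_subtopology by blast
  have "Q - U \<subseteq> S" "Q - U \<noteq> {}" "S - (Q - U) \<noteq> {}"
    using cover q x U(3) by auto
  then obtain a b where ab: "a \<in> Q - U" "b \<in> S - (Q - U)" "Rel a b"
    using tg_connected_edge_across[OF conn _ _ _ clA clB] by blast
  show False
  proof (cases "b \<in> U")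
    case True
    have "Rel b a" using ab(3) symp by (simp add: sympD)
    moreover have "a \<in> S - U" "b \<in> S \<inter> U" using ab(1,2) cover(1) True by auto
    ultimately have "a = z"
      using exit[unfolded single_exit_def, rule_format, of u b z a] uz by blast
    then show False using ab(1) z by blast
  next
    case False
    then have "b \<in> P" using ab cover U(3) by auto
    then show False using ab apart by blast
  qed
qed

lemma tg_connected_Diff_point:
  assumes symp: "symp Rel" and conn: "tg_connected T Rel S" and x: "x \<in> S"
    and S: "S \<subseteq> topspace T"
    and sep: "\<And>p q. p \<in> S - {x} \<Longrightarrow> q \<in> S - {x} \<Longrightarrow> \<exists>U. openin T U \<and> closedin T U
                 \<and> x \<in> U \<and> p \<notin> U \<and> q \<notin> U \<and> single_exit Rel S U"
  shows "tg_connected T Rel (S - {x})"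
  unfolding tg_connected_def
proof (intro notI, elim exE conjE)
  fix P Q assume ne: "P \<noteq> {}" "Q \<noteq> {}" and PQ: "P \<inter> Q = {}" "P \<union> Q = S - {x}"
    and cl: "closedin (subtopology T (S - {x})) P" "closedin (subtopology T (S - {x})) Q"
    and PQ_apart: "\<forall>a\<in>P. \<forall>b\<in>Q. \<not> Rel a b"
  from ne obtain p q where pq: "p \<in> P" "q \<in> Q" by blast
  then have "p \<in> S - {x}" "q \<in> S - {x}" using PQ(2) by auto
  then obtain U where U: "openin T U" "closedin T U" "x \<in> U" "p \<notin> U" "q \<notin> U"
    and exit: "single_exit Rel S U"
    using sep by blast
  have "closedin (subtopology T S) (S \<inter> U)"
    using U(2) by (auto simp: closedin_subtopology)
  moreover have "closedin (subtopology T S) (S - (S \<inter> U))"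
    using S U(1) by (auto simp: closedin_subtopology intro!: exI[of _ "topspace T - U"])
  moreover have "S \<inter> U \<noteq> {}" "S - (S \<inter> U) \<noteq> {}" using x U(3,4) pq PQ(2) by auto
  ultimately obtain u z where uz: "u \<in> S \<inter> U" "z \<in> S - U" "Rel u z"
    using tg_connected_edge_across[OF conn, of "S \<inter> U"] by blast
  txt \<open>Both sides of the separation leave U, so both contain its single exit z.\<close>
  have "\<forall>a\<in>Q. \<forall>b\<in>P. \<not> Rel a b" using PQ_apart symp by (auto dest: sympD)
  then have "z \<in> Q"
    using separation_side_contains_exit[OF symp conn x S U(1-3) exit uz PQ(2,1) cl] pq(2) U(5)
    by blast
  moreover have "Q \<union> P = S - {x}" "Q \<inter> P = {}" using PQ by auto
  then have "z \<in> P"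
    using separation_side_contains_exit[OF symp conn x S U(1-3) exit uz _ _ cl(2,1) PQ_apart pq(1) U(4)]
    by blast
  ultimately show False using PQ(1) by blast
qed

section \<open>Subdividing an edge and attaching an endpoint\<close>

locale edge_subdivision =
  fixes P :: "enat set" and G :: ltree and v c :: nat
  assumes obj: "is_obj P G" and v_V: "v \<in> V G" and v_ramification: "3 \<le> ord G v"
    and edge_vc: "R G v c" and c_ne_v: "c \<noteq> v"
begin

definition w :: nat where "w = Suc (Max (V G))"
definition e :: nat where "e = Suc w"

definition Y :: ltree where
  "Y = \<lparr>V = V G \<union> {w, e},
        R = (\<lambda>a b. (R G a b \<and> \<not> (a = v \<and> b = c) \<and> \<not> (a = c \<and> b = v))
               \<or> (a = w \<and> b \<in> {v, c, e, w}) \<or> (b = w \<and> a \<in> {v, c, e}) \<or> (a = e \<and> b = e)),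
        lab = (lab G)(w := lab G v, e := None)\<rparr>"

definition collapse :: "nat \<Rightarrow> nat" where
  "collapse x = (if x \<in> {w, e} then v else x)"

lemma tree_G: "is_tree G"
  using obj unfolding is_obj_def by blast

lemma symp_G: "symp (R G)"
  using is_tree_symp[OF tree_G] .

lemma edge_G_V: "R G a b \<Longrightarrow> a \<in> V G \<and> b \<in> V G"
  using is_tree_edge_in_V[OF tree_G] .

lemma refl_G: "x \<in> V G \<Longrightarrow> R G x x"
  using tree_G unfolding is_tree_def by blast

lemma c_V: "c \<in> V G"
  using edge_G_V edge_vc by blast

lemma w_notin: "w \<notin> V G" and e_notin: "e \<notin> V G"
proof -
  have "finite (V G)" using tree_G unfolding is_tree_def by blast
  then have "x \<le> Max (V G)" if "x \<in> V G" for x using that by simp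
  then show "w \<notin> V G" "e \<notin> V G" unfolding w_def e_def by fastforce+
qed

lemma w_ne_e: "w \<noteq> e"
  unfolding e_def by simp

lemmas new_vertices = w_notin e_notin w_ne_e v_V c_V c_ne_v

lemma V_Y: "V Y = V G \<union> {w, e}"
  by (simp add: Y_def)

lemma R_Y_old:
  "a \<in> V G \<Longrightarrow> b \<in> V G \<Longrightarrow> R Y a b \<longleftrightarrow> R G a b \<and> \<not> (a = v \<and> b = c) \<and> \<not> (a = c \<and> b = v)"
  using w_notin e_notin by (auto simp: Y_def)

lemma R_Y_w: "R Y w b \<longleftrightarrow> b \<in> {v, c, e, w}" and R_Y_e: "R Y e b \<longleftrightarrow> b \<in> {w, e}"
  using new_vertices edge_G_V by (auto simp: Y_def)

lemma symp_Y: "symp (R Y)"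
  using sympD[OF symp_G] unfolding Y_def symp_def by auto

lemma edge_Y_V: "R Y a b \<Longrightarrow> a \<in> V Y \<and> b \<in> V Y"
  using edge_G_V new_vertices by (auto simp: Y_def)

lemma collapse_V: "x \<in> V Y \<Longrightarrow> collapse x \<in> V G"
  using v_V unfolding V_Y collapse_def by auto

lemma collapse_fixes_V: "x \<in> V G \<Longrightarrow> collapse x = x"
  using new_vertices unfolding collapse_def by auto

lemma nbrs_Y_old: "x \<in> V G - {v, c} \<Longrightarrow> nbrs Y x = nbrs G x"
  using new_vertices edge_G_V by (auto simp: nbrs_def Y_def)

lemma nbrs_Y_end_of_edge:
  assumes "(x = v \<and> y = c) \<or> (x = c \<and> y = v)"
  shows "nbrs Y x = insert w (nbrs G x - {y})"
  using assms new_vertices edge_G_V by (auto simp: nbrs_def Y_def)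

lemma ord_Y_old: "x \<in> V G \<Longrightarrow> ord Y x = ord G x"
proof -
  assume x: "x \<in> V G"
  have fin: "finite (nbrs G x)" using tree_G unfolding is_tree_def nbrs_def by simp
  show ?thesis
  proof (cases "x \<in> {v, c}")
    case True
    then obtain y where xy: "(x = v \<and> y = c) \<or> (x = c \<and> y = v)" by blast
    then have "y \<in> nbrs G x" "w \<notin> nbrs G x"
      using edge_vc sympD[OF symp_G] new_vertices unfolding nbrs_def by auto
    moreover have "0 < card (nbrs G x)" using fin calculation(1) card_gt_0_iff by blast
    ultimately show ?thesis
      unfolding ord_eq_card_nbrs nbrs_Y_end_of_edge[OF xy] using fin
      by (simp add: card_Diff_singleton)
  next
    case False
    then show ?thesis using x nbrs_Y_old unfolding ord_eq_card_nbrs by simp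
  qed
qed

lemma ord_Y_w: "ord Y w = 3" and ord_Y_e: "ord Y e = 1"
proof -
  have "nbrs Y w = {v, c, e}" "nbrs Y e = {w}"
    using new_vertices edge_G_V by (auto simp: nbrs_def Y_def)
  moreover have "e \<noteq> v" "e \<noteq> c" using e_notin v_V c_V by auto
  ultimately show "ord Y w = 3" "ord Y e = 1"
    unfolding ord_eq_card_nbrs using c_ne_v by auto
qed

lemma preim_collapse_fixes: "x \<in> V G \<Longrightarrow> x \<in> S \<Longrightarrow> x \<in> preim Y collapse S"
  unfolding preim_def V_Y using collapse_fixes_V by auto

lemma preim_collapse_new: "v \<in> S \<Longrightarrow> w \<in> preim Y collapse S \<and> e \<in> preim Y collapse S"
  unfolding preim_def V_Y collapse_def by auto

lemma lift_edge:
  assumes S: "S \<subseteq> V G" and ab: "restr G S a b"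
  shows "(restr Y (preim Y collapse S))\<^sup>*\<^sup>* a b"
proof -
  have ab': "a \<in> preim Y collapse S" "b \<in> preim Y collapse S" "R G a b"
    using ab S preim_collapse_fixes unfolding restr_def by auto
  show ?thesis
  proof (cases "(a = v \<and> b = c) \<or> (a = c \<and> b = v)")
    case True
    txt \<open>The removed edge between v and c is replaced by the path through w.\<close>
    then have "w \<in> preim Y collapse S" using ab preim_collapse_new unfolding restr_def by auto
    moreover have "R Y a w" "R Y w b" using True R_Y_w sympD[OF symp_Y] by auto
    ultimately have "restr Y (preim Y collapse S) a w" "restr Y (preim Y collapse S) w b"
      using ab' unfolding restr_def by auto
    then show ?thesis by (meson rtranclp.rtrancl_into_rtrancl rtranclp.rtrancl_refl)
  next
    case False
    then have "restr Y (preim Y collapse S) a b"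
      using ab' S R_Y_old edge_G_V unfolding restr_def by auto
    then show ?thesis by blast
  qed
qed

lemma lift_path:
  assumes "S \<subseteq> V G" "(restr G S)\<^sup>*\<^sup>* a b"
  shows "(restr Y (preim Y collapse S))\<^sup>*\<^sup>* a b"
  using assms(2)
  by (induction rule: rtranclp_induct) (auto intro: rtranclp_trans lift_edge[OF assms(1)])

lemma path_to_collapse:
  assumes x: "x \<in> preim Y collapse S"
  shows "(restr Y (preim Y collapse S))\<^sup>*\<^sup>* x (collapse x)"
proof (cases "x \<in> {w, e}")
  case True
  then have "v \<in> S" using x unfolding preim_def collapse_def by auto
  then have "restr Y (preim Y collapse S) e w" "restr Y (preim Y collapse S) w v"
    using preim_collapse_new preim_collapse_fixes[OF v_V] R_Y_e R_Y_w unfolding restr_def by auto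
  then show ?thesis using True unfolding collapse_def
    by (auto intro: rtranclp.rtrancl_into_rtrancl)
qed (simp add: collapse_def)

lemma conn_set_preim_collapse:
  assumes conn: "conn_set G S"
  shows "conn_set Y (preim Y collapse S)"
  unfolding conn_set_def
proof (intro conjI ballI)
  show "preim Y collapse S \<subseteq> V Y" unfolding preim_def by auto
  fix x y assume x: "x \<in> preim Y collapse S" and y: "y \<in> preim Y collapse S"
  then have "(restr G S)\<^sup>*\<^sup>* (collapse x) (collapse y)" using conn unfolding conn_set_def preim_def by auto
  then have "(restr Y (preim Y collapse S))\<^sup>*\<^sup>* (collapse x) (collapse y)"
    using lift_path conn unfolding conn_set_def by blast
  moreover have "(restr Y (preim Y collapse S))\<^sup>*\<^sup>* (collapse y) y"
    using sympD[OF symp_rtranclp[OF symp_restr[OF symp_Y]]] path_to_collapse[OF y] by blast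
  ultimately show "(restr Y (preim Y collapse S))\<^sup>*\<^sup>* x y"
    using path_to_collapse[OF x] by (meson rtranclp_trans)
qed

lemma edge_Y_imp_G: "a \<in> V G \<Longrightarrow> b \<in> V G \<Longrightarrow> R Y a b \<Longrightarrow> R G a b"
  using R_Y_old by blast

lemma no_cycle_through_e: "\<not> is_cycle (R Y) (e # ps)"
proof
  assume ps: "is_cycle (R Y) (e # ps)"
  then have "ps \<noteq> []" "e \<notin> set ps" "R Y e (hd ps)" "R Y e (last ps)"
    using sympD[OF symp_Y] unfolding is_cycle_Cons by auto
  moreover have "hd ps \<noteq> e" "last ps \<noteq> e"
    using calculation(1,2) hd_in_set last_in_set by metis+
  ultimately have "hd ps = w" "last ps = w" unfolding R_Y_e by auto
  then show False using is_cycle_Cons_hd_neq_last[OF ps] by simp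
qed

text \<open>Without w, a cycle through w is a path from v to c in G that closes up along the edge vc.\<close>
lemma no_cycle_through_w:
  assumes ps: "is_cycle (R Y) (w # ps)" and ps_G: "set ps \<subseteq> V G"
  shows False
proof -
  have facts: "2 \<le> length ps" "distinct ps" "successively (R Y) ps" "R Y w (hd ps)" "R Y w (last ps)"
    using ps sympD[OF symp_Y] unfolding is_cycle_Cons by auto
  have "ps \<noteq> []" using facts(1) by (cases ps) auto
  then have in_G: "hd ps \<in> V G" "last ps \<in> V G" using ps_G by auto
  then have "hd ps \<in> {v, c}" "last ps \<in> {v, c}"
    using facts(4,5) new_vertices unfolding R_Y_w by auto
  with is_cycle_Cons_hd_neq_last[OF ps]
  have ends: "(hd ps = v \<and> last ps = c) \<or> (hd ps = c \<and> last ps = v)" by auto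
  have "length ps \<noteq> 2"
  proof
    assume "length ps = 2"
    then have "R Y (hd ps) (last ps)"
      using successively_nth[OF facts(3), of 0] \<open>ps \<noteq> []\<close> by (simp add: hd_conv_nth last_conv_nth)
    then show False using ends in_G R_Y_old by blast
  qed
  moreover have "successively (R G) ps"
    using facts(3) ps_G edge_Y_imp_G by (auto elim!: successively_mono)
  moreover have "R G (last ps) (hd ps)" using ends edge_vc sympD[OF symp_G] by auto
  ultimately have "is_cycle (R G) ps" using facts(1,2) unfolding is_cycle_def by simp
  then show False using is_tree_no_cycle[OF tree_G ps_G] by blast
qed

lemma Y_no_cycle:
  assumes cs: "set cs \<subseteq> V Y"
  shows "\<not> is_cycle (R Y) cs"
proof
  assume cyc: "is_cycle (R Y) cs"
  consider "e \<in> set cs" | "w \<in> set cs" "e \<notin> set cs" | "set cs \<subseteq> V G" using cs V_Y by auto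
  then show False
  proof cases
    case 1
    then obtain ps where "is_cycle (R Y) (e # ps)" using is_cycle_through[OF cyc] by blast
    then show False using no_cycle_through_e by blast
  next
    case 2
    then obtain ps where ps: "is_cycle (R Y) (w # ps)" "set (w # ps) = set cs"
      using is_cycle_through[OF cyc] by blast
    moreover have "set ps \<subseteq> V G" using ps 2 cs unfolding is_cycle_Cons V_Y by auto
    ultimately show False using no_cycle_through_w by blast
  next
    case 3
    have "cs \<noteq> []" using cyc unfolding is_cycle_def by auto
    then have "hd cs \<in> V G" "last cs \<in> V G" using 3 by auto
    then have "is_cycle (R G) cs"
      using cyc 3 edge_Y_imp_G unfolding is_cycle_def by (auto elim!: successively_mono)
    then show False using is_tree_no_cycle[OF tree_G 3] by blast
  qed
qed

lemma tree_Y: "is_tree Y"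
  unfolding is_tree_def
proof (intro conjI allI impI ballI)
  have "finite (V G)" using tree_G unfolding is_tree_def by blast
  then show "finite (V Y)" "V Y \<noteq> {}" unfolding V_Y by auto
  show "\<And>x y. R Y x y \<Longrightarrow> x \<in> V Y" "\<And>x y. R Y x y \<Longrightarrow> y \<in> V Y" using edge_Y_V by blast+
  show "\<And>x y. R Y x y \<Longrightarrow> R Y y x" using sympD[OF symp_Y] .
  show "R Y x x" if "x \<in> V Y" for x
    using that refl_G c_ne_v by (auto simp: Y_def)
  have "conn_set G (V G)" using tree_G unfolding is_tree_def by blast
  then have "conn_set Y (preim Y collapse (V G))" by (rule conn_set_preim_collapse)
  moreover have "preim Y collapse (V G) = V Y" unfolding preim_def using collapse_V by auto
  ultimately show "conn_set Y (V Y)" by simp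
  show "\<nexists>cs. 3 \<le> length cs \<and> distinct cs \<and> set cs \<subseteq> V Y
      \<and> (\<forall>i<length cs. R Y (cs ! i) (cs ! ((i + 1) mod length cs)))"
    using Y_no_cycle unfolding is_cycle_iff_cyclically_adjacent by blast
qed

lemma lab_Y: "lab Y x = (if x = w then lab G v else if x = e then None else lab G x)"
  using w_ne_e by (simp add: Y_def)

lemma obj_Y: "is_obj P Y"
  unfolding is_obj_def
proof (intro conjI ballI impI)
  have G: "\<And>a. a \<in> V G \<Longrightarrow> ord G a = 1 \<or> 3 \<le> ord G a"
    "\<And>a. a \<in> V G \<Longrightarrow> 3 \<le> ord G a \<Longrightarrow> \<exists>p\<in>P. lab G a = Some p \<and> enat (ord G a) \<le> p"
    "\<And>a. a \<in> V G \<Longrightarrow> ord G a = 1 \<Longrightarrow> lab G a = None"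
    using obj unfolding is_obj_def by blast+
  show "is_tree Y" by (rule tree_Y)
  show "\<exists>a\<in>V Y. 3 \<le> ord Y a" using ord_Y_w V_Y by auto
  fix a assume a: "a \<in> V Y"
  then consider "a \<in> V G" | "a = w" | "a = e" unfolding V_Y by auto
  note cases = this
  then show "ord Y a = 1 \<or> 3 \<le> ord Y a"
    by cases (use G(1) ord_Y_old ord_Y_w ord_Y_e in auto)
  show "ord Y a = 1 \<Longrightarrow> lab Y a = None"
    using cases by cases (use G(3) ord_Y_old ord_Y_w new_vertices in \<open>auto simp: lab_Y\<close>)
  assume a3: "3 \<le> ord Y a"
  show "\<exists>p\<in>P. lab Y a = Some p \<and> enat (ord Y a) \<le> p"
    using cases
  proof cases
    case 2
    txt \<open>The label of w is that of v, which is at least the order of v.\<close>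
    obtain p where p: "p \<in> P" "lab G v = Some p" "enat (ord G v) \<le> p"
      using G(2)[OF v_V v_ramification] by blast
    have "enat (ord Y w) \<le> enat (ord G v)" using ord_Y_w v_ramification by simp
    then have "enat (ord Y w) \<le> p" using p(3) by (rule order_trans)
    then show ?thesis using 2 p by (auto simp: lab_Y)
  qed (use a3 G(2) ord_Y_old ord_Y_e new_vertices in \<open>auto simp: lab_Y\<close>)
qed

lemma epi_collapse: "epi Y G collapse"
  unfolding epi_def
proof (intro conjI allI impI ballI)
  show "\<And>x. x \<in> V Y \<Longrightarrow> collapse x \<in> V G" by (rule collapse_V)
  show "R G (collapse x) (collapse y)" if "R Y x y" for x y
    using that edge_vc sympD[OF symp_G edge_vc] refl_G[OF v_V] edge_G_V[of x y] new_vertices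
    unfolding Y_def collapse_def by auto
  fix a a' assume aa': "R G a a'"
  show "\<exists>b b'. R Y b b' \<and> collapse b = a \<and> collapse b' = a'"
  proof (cases "(a = v \<and> a' = c) \<or> (a = c \<and> a' = v)")
    case True
    then show ?thesis
    proof
      assume "a = v \<and> a' = c"
      then show ?thesis using R_Y_w collapse_fixes_V c_V by (intro exI[of _ w] exI[of _ c]) (auto simp: collapse_def)
    next
      assume "a = c \<and> a' = v"
      then show ?thesis using R_Y_w sympD[OF symp_Y] collapse_fixes_V c_V
        by (intro exI[of _ c] exI[of _ w]) (auto simp: collapse_def)
    qed
  next
    case False
    then have "R Y a a'" using aa' R_Y_old edge_G_V by blast
    then show ?thesis using aa' edge_G_V collapse_fixes_V by blast
  qed
qed

text \<open>Collapsing w and e onto a neighbour of w different from a maps Y - {a} into G - {a}.\<close>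
definition retract :: "nat \<Rightarrow> nat \<Rightarrow> nat" where
  "retract a x = (if x \<in> {w, e} then (if a = c then v else c) else x)"

lemma retract_hom: "R Y x y \<Longrightarrow> R G (retract a x) (retract a y)"
  using edge_vc sympD[OF symp_G edge_vc] refl_G[OF v_V] refl_G[OF c_V] edge_G_V[of x y] new_vertices
  unfolding Y_def retract_def by auto

lemma cut_component_Y_imp_G:
  assumes a: "a \<in> V G" and xy: "x \<in> V G - {a}" "y \<in> cut_component Y a x" "y \<in> V G"
  shows "y \<in> cut_component G a x"
proof -
  have "retract a z \<in> V G - {a}" if "z \<in> V Y - {a}" for z
  proof (cases "z \<in> {w, e}")
    case True
    then show ?thesis using c_ne_v v_V c_V unfolding retract_def by auto
  next
    case False
    then show ?thesis using that unfolding retract_def V_Y by simp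
  qed
  then have into: "retract a ` (V Y - {a}) \<subseteq> V G - {a}" by (rule image_subsetI)
  have path: "(restr Y (V Y - {a}))\<^sup>*\<^sup>* x y" using xy(2) unfolding cut_component_def by simp
  have hom: "\<And>x y. R Y x y \<Longrightarrow> R G (retract a x) (retract a y)" by (rule retract_hom)
  have "(restr G (V G - {a}))\<^sup>*\<^sup>* (retract a x) (retract a y)"
    using restr_rtranclp_hom[OF hom into path] .
  moreover have "retract a x = x" "retract a y = y"
    using xy new_vertices unfolding retract_def by auto
  ultimately show ?thesis using xy unfolding cut_component_def by auto
qed

lemma preim_comp_subset_cut_component:
  assumes a: "a \<in> V G" and C: "C \<in> comps G a" and x: "x \<in> C"
  shows "preim Y collapse C \<subseteq> cut_component Y a x"
proof (rule conn_set_subset_cut_component)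
  have x': "x \<in> V G - {a}" and C_eq: "C = cut_component G a x"
    using comps_cut_component_member[OF symp_G C x] by blast+
  have "conn_set G C" using conn_set_cut_component[OF symp_G x'] C_eq by simp
  then show "conn_set Y (preim Y collapse C)" by (rule conn_set_preim_collapse)
  show "preim Y collapse C \<subseteq> V Y - {a}"
    using C_eq collapse_fixes_V[OF a] unfolding preim_def cut_component_def by auto
  show "x \<in> preim Y collapse C" using x x' preim_collapse_fixes by blast
qed

lemma wc_witness_self:
  assumes a: "a \<in> V G"
  shows "wc_witness Y G collapse a a"
  unfolding wc_witness_def
proof (intro conjI)
  show "a \<in> V Y" "collapse a = a" "ord G a \<le> ord Y a" using a collapse_fixes_V ord_Y_old V_Y by auto
  define pick where "pick C = (SOME x. x \<in> C)" for C :: "nat set"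
  have pick: "pick C \<in> C" "pick C \<in> V G - {a}" "C = cut_component G a (pick C)"
    if C: "C \<in> comps G a" for C
  proof -
    show "pick C \<in> C" unfolding pick_def using comps_nonempty[OF C] by (simp add: some_in_eq)
    then show "pick C \<in> V G - {a}" "C = cut_component G a (pick C)"
      using comps_cut_component_member[OF symp_G C] by blast+
  qed
  show "\<exists>\<phi>. inj_on \<phi> (comps G a) \<and> (\<forall>C\<in>comps G a. \<phi> C \<in> comps Y a \<and> preim Y collapse C \<subseteq> \<phi> C)"
  proof (intro exI[of _ "\<lambda>C. cut_component Y a (pick C)"] conjI ballI)
    fix C assume C: "C \<in> comps G a"
    show "cut_component Y a (pick C) \<in> comps Y a"
      unfolding comps_eq_cut_components using pick(2)[OF C] V_Y by auto
    show "preim Y collapse C \<subseteq> cut_component Y a (pick C)"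
      by (rule preim_comp_subset_cut_component[OF a C pick(1)[OF C]])
  next
    show "inj_on (\<lambda>C. cut_component Y a (pick C)) (comps G a)"
    proof (rule inj_onI)
      fix C C' assume C: "C \<in> comps G a" and C': "C' \<in> comps G a"
        and eq: "cut_component Y a (pick C) = cut_component Y a (pick C')"
      have "pick C' \<in> cut_component Y a (pick C)"
        using eq pick(2)[OF C'] cut_component_self[of "pick C'" Y a] V_Y by auto
      then have "pick C' \<in> cut_component G a (pick C)"
        using cut_component_Y_imp_G[OF a pick(2)[OF C]] pick(2)[OF C'] by blast
      then have "cut_component G a (pick C') = cut_component G a (pick C)"
        by (rule cut_component_eq[OF symp_G])
      then show "C = C'" using pick(3)[OF C] pick(3)[OF C'] by metis
    qed
  qed
qed

definition collapse_arrow :: arrow where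
  "collapse_arrow = \<lparr>pm = collapse, em = id\<rparr>"

lemma is_arrow_Y: "is_arrow P Y G collapse_arrow"
  unfolding is_arrow_def collapse_arrow_def
proof (simp, intro conjI ballI allI impI)
  show "weakly_coherent Y G collapse"
    unfolding weakly_coherent_def mono_epi_def using epi_collapse conn_set_preim_collapse wc_witness_self by blast
next
  fix a b p assume a: "a \<in> V G" and ab: "lab G a = Some p \<and> wc_witness Y G collapse a b"
  then have b: "b \<in> V Y" "collapse b = a" "ord G a \<le> ord Y b" unfolding wc_witness_def by auto
  have "ord G a = 1 \<or> 3 \<le> ord G a" "ord G a = 1 \<longrightarrow> lab G a = None"
    using obj a unfolding is_obj_def by blast+
  then have "3 \<le> ord G a" using ab by auto
  then have "b \<noteq> e" using b ord_Y_e by auto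
  then show "lab Y b = Some p"
    using b ab collapse_fixes_V unfolding lab_Y V_Y collapse_def by auto
next
  fix y assume y: "y \<in> Ends G"
  then show "y \<in> Ends Y" using Ends_V ord_Y_old unfolding Ends_def V_Y by auto
  show "collapse y = y" using y Ends_V collapse_fixes_V by blast
qed

lemma e_Ends: "e \<in> Ends Y" and collapse_e: "collapse e = v"
  using ord_Y_e unfolding Ends_def V_Y collapse_def by auto

end

lemma ex_arrow_with_endpoint_over:
  assumes obj: "is_obj P G" and v: "v \<in> V G" "3 \<le> ord G v"
  shows "\<exists>Y h. is_obj P Y \<and> is_arrow P Y G h \<and> (\<exists>t\<in>Ends Y. pm h t = v)"
proof -
  have "nbrs G v \<noteq> {}" using v(2) unfolding ord_eq_card_nbrs by auto
  then obtain c where "c \<in> nbrs G v" by blast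
  then interpret edge_subdivision P G v c
    using obj v by unfold_locales (auto simp: nbrs_def)
  show ?thesis
    using obj_Y is_arrow_Y e_Ends collapse_e
    by (intro exI[of _ Y] exI[of _ collapse_arrow] conjI bexI[of _ e]) (simp_all add: collapse_arrow_def)
qed

section \<open>The limit of a Fraisse sequence\<close>

definition end_thread :: "(nat \<Rightarrow> nat \<Rightarrow> arrow) \<Rightarrow> nat \<Rightarrow> nat \<Rightarrow> nat \<Rightarrow> nat" where
  "end_thread f m y = (\<lambda>i. if i < m then pm (f m i) y else if i = m then y else em (f i m) y)"

lemma Elim_eq: "Elim F f = {end_thread f m y | m y. y \<in> Ends (F m)}"
  unfolding Elim_def end_thread_def by blast

lemma topspace_Ftop: "topspace (Ftop F f) = Flim F f"
  unfolding Ftop_def Flim_def by (auto simp: PiE_iff)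

lemma Ftop_fibre_clopen:
  assumes "v \<in> V (F k)"
  shows "openin (Ftop F f) {z \<in> Flim F f. z k = v}" "closedin (Ftop F f) {z \<in> Flim F f. z k = v}"
proof -
  have cm: "continuous_map (Ftop F f) (discrete_topology (V (F k))) (\<lambda>z. z k)"
    unfolding Ftop_def
    by (rule continuous_map_from_subtopology[OF continuous_map_product_projection]) simp
  have fibre: "{z \<in> topspace (Ftop F f). z k \<in> {v}} = {z \<in> Flim F f. z k = v}"
    using topspace_Ftop by auto
  show "openin (Ftop F f) {z \<in> Flim F f. z k = v}" "closedin (Ftop F f) {z \<in> Flim F f. z k = v}"
    using openin_continuous_map_preimage[OF cm, of "{v}"]
      closedin_continuous_map_preimage[OF cm, of "{v}"] assms
    unfolding fibre by simp_all
qed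

locale fraisse_sequence =
  fixes P :: "enat set" and F :: "nat \<Rightarrow> ltree" and f :: "nat \<Rightarrow> nat \<Rightarrow> arrow"
  assumes fraisse: "fraisse_seq P F f"
begin

lemma obj_F: "is_obj P (F n)"
  using fraisse unfolding fraisse_seq_def by blast

lemma tree_F: "is_tree (F n)"
  using obj_F unfolding is_obj_def by blast

lemma arrow_f: "n \<le> m \<Longrightarrow> is_arrow P (F m) (F n) (f m n)"
  using fraisse unfolding fraisse_seq_def by blast

lemma pm_id: "x \<in> V (F n) \<Longrightarrow> pm (f n n) x = x"
  using fraisse unfolding fraisse_seq_def arr_eq_def id_arrow_def by auto

lemma pm_comp: "n \<le> m \<Longrightarrow> m \<le> k \<Longrightarrow> x \<in> V (F k) \<Longrightarrow> pm (f k n) x = pm (f m n) (pm (f k m) x)"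
  using fraisse unfolding fraisse_seq_def arr_eq_def comp_def by auto

lemma em_comp: "n \<le> m \<Longrightarrow> m \<le> k \<Longrightarrow> y \<in> Ends (F n) \<Longrightarrow> em (f k n) y = em (f k m) (em (f m n) y)"
  using fraisse unfolding fraisse_seq_def arr_eq_def comp_def by auto

lemma pm_in_V: "n \<le> m \<Longrightarrow> x \<in> V (F m) \<Longrightarrow> pm (f m n) x \<in> V (F n)"
  using arrow_f unfolding is_arrow_def weakly_coherent_def mono_epi_def epi_def by blast

lemma em_Ends: "n \<le> m \<Longrightarrow> y \<in> Ends (F n) \<Longrightarrow> em (f m n) y \<in> Ends (F m) \<and> pm (f m n) (em (f m n) y) = y"
  using arrow_f unfolding is_arrow_def by blast

lemma mono_epi_f: "n \<le> m \<Longrightarrow> mono_epi (F m) (F n) (pm (f m n))"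
  using arrow_f unfolding is_arrow_def weakly_coherent_def by blast

lemma Flim_proj:
  assumes x: "x \<in> Flim F f" and il: "i \<le> l"
  shows "pm (f l i) (x l) = x i"
  using il
proof (induction l rule: dec_induct)
  case base then show ?case using pm_id x unfolding Flim_def by auto
next
  case (step l)
  have "pm (f (Suc l) i) (x (Suc l)) = pm (f l i) (pm (f (Suc l) l) (x (Suc l)))"
    using pm_comp[of i l "Suc l" "x (Suc l)"] step x unfolding Flim_def by auto
  also have "\<dots> = pm (f l i) (x l)" using x unfolding Flim_def by auto
  finally show ?case using step by simp
qed

lemma end_thread_Flim:
  assumes y: "y \<in> Ends (F m)"
  shows "end_thread f m y \<in> Flim F f"
  unfolding Flim_def
proof (intro CollectI allI conjI)
  have yV: "y \<in> V (F m)" using y Ends_V by blast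
  fix i
  show "end_thread f m y i \<in> V (F i)"
    using pm_in_V[of i m] em_Ends[OF _ y, of i] yV subsetD[OF Ends_V] by (auto simp: end_thread_def)
  consider "Suc i < m" | "Suc i = m" | "i = m" | "m < i" by linarith
  then show "pm (f (Suc i) i) (end_thread f m y (Suc i)) = end_thread f m y i"
  proof cases
    case 1 then show ?thesis using pm_comp[of i "Suc i" m y] yV by (simp add: end_thread_def)
  next
    case 2 then show ?thesis by (simp add: end_thread_def)
  next
    case 3 then show ?thesis using em_Ends[OF _ y, of "Suc m"] by (simp add: end_thread_def)
  next
    case 4
    then have "em (f i m) y \<in> Ends (F i)" using em_Ends[OF _ y, of i] by simp
    then show ?thesis
      using 4 em_comp[of m i "Suc i" y] y em_Ends[of i "Suc i"] by (simp add: end_thread_def)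
  qed
qed

lemma end_thread_Ends: "y \<in> Ends (F m) \<Longrightarrow> m \<le> k \<Longrightarrow> end_thread f m y k \<in> Ends (F k)"
  using em_Ends[of m k y] by (auto simp: end_thread_def)

lemma end_thread_below: "y \<in> Ends (F m) \<Longrightarrow> k \<le> m \<Longrightarrow> end_thread f m y k = pm (f m k) y"
  using pm_id subsetD[OF Ends_V] by (auto simp: end_thread_def)

lemma Rlim_symp: "symp (Rlim F)"
  using is_tree_symp[OF tree_F] unfolding Rlim_def symp_def by blast

text \<open>For l \<ge> k, the threads through x k and through one of its neighbours meet F l in
  disjoint connected preimages, joined by a single edge since F l is a tree.\<close>
lemma Flim_single_exit:
  assumes x: "x \<in> Flim F f" and end_k: "x k \<in> Ends (F k)" and S: "S \<subseteq> Flim F f"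
  shows "single_exit (Rlim F) S {z \<in> Flim F f. z k = x k}"
  unfolding single_exit_def
proof (intro ballI impI)
  fix u u' z z'
  assume u: "u \<in> S \<inter> {z \<in> Flim F f. z k = x k}" and u': "u' \<in> S \<inter> {z \<in> Flim F f. z k = x k}"
    and z: "z \<in> S - {z \<in> Flim F f. z k = x k}" and z': "z' \<in> S - {z \<in> Flim F f. z k = x k}"
    and uz: "Rlim F u z" and uz': "Rlim F u' z'"
  have in_Flim: "u \<in> Flim F f" "u' \<in> Flim F f" "z \<in> Flim F f" "z' \<in> Flim F f"
    using u u' z z' S by auto
  have "R (F k) (x k) (z k)" "R (F k) (x k) (z' k)"
    using uz[unfolded Rlim_def, rule_format, of k] uz'[unfolded Rlim_def, rule_format, of k] u u'
    by auto
  moreover have zne: "z k \<noteq> x k" "z' k \<noteq> x k" using z z' in_Flim by auto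
  ultimately have zk: "z k = z' k" by (rule Ends_neighbour_unique[OF tree_F end_k])
  show "z = z'"
  proof
    fix l
    show "z l = z' l"
    proof (cases "l \<le> k")
      case True
      then show ?thesis using Flim_proj[OF in_Flim(3) True] Flim_proj[OF in_Flim(4) True] zk by metis
    next
      case False
      then have kl: "k \<le> l" by simp
      let ?pre = "\<lambda>t. preim (F l) (pm (f l k)) {t}"
      have xV: "x k \<in> V (F k)" "z k \<in> V (F k)" using x in_Flim unfolding Flim_def by auto
      have conn: "conn_set (F l) (?pre (x k))" "conn_set (F l) (?pre (z k))"
        using mono_epi_f[OF kl] xV unfolding mono_epi_def conn_set_def by auto
      have "?pre (x k) \<inter> ?pre (z k) = {}" using zne(1) unfolding preim_def by auto
      moreover have "u l \<in> ?pre (x k)" "u' l \<in> ?pre (x k)" "z l \<in> ?pre (z k)" "z' l \<in> ?pre (z k)"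
        using Flim_proj[OF _ kl] in_Flim u u' zk unfolding preim_def Flim_def by auto
      ultimately show ?thesis
        using tree_cross_edge_unique[OF tree_F conn] uz uz' unfolding Rlim_def by blast
    qed
  qed
qed

lemma Elim_subset_Flim: "Elim F f \<subseteq> Flim F f"
  unfolding Elim_eq using end_thread_Flim by blast

lemma Elim_endpoint:
  assumes "x \<in> Elim F f"
  shows "tg_endpoint (Ftop F f) (Rlim F) x"
proof -
  obtain m y where y: "y \<in> Ends (F m)" and xy: "x = end_thread f m y"
    using assms unfolding Elim_eq by blast
  have x: "x \<in> Flim F f" using end_thread_Flim[OF y] xy by simp
  have "tg_connected (Ftop F f) (Rlim F) (S - {x})"
    if arc: "tg_arc (Ftop F f) (Rlim F) S" and xS: "x \<in> S" for S
  proof (rule tg_connected_Diff_point[OF Rlim_symp _ xS])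
    show "tg_connected (Ftop F f) (Rlim F) S" using arc unfolding tg_arc_def by blast
    show S: "S \<subseteq> topspace (Ftop F f)" using arc unfolding tg_arc_def by blast
    fix p q assume pq: "p \<in> S - {x}" "q \<in> S - {x}"
    then have pqF: "p \<in> Flim F f" "q \<in> Flim F f" using S topspace_Ftop by auto
    have "p \<noteq> x" "q \<noteq> x" using pq by auto
    then obtain i j where ij: "p i \<noteq> x i" "q j \<noteq> x j" unfolding fun_eq_iff by blast
    define k where "k = max m (max i j)"
    have k: "i \<le> k" "j \<le> k" "m \<le> k" unfolding k_def by auto
    have "p k \<noteq> x k" using Flim_proj[OF pqF(1) k(1)] Flim_proj[OF x k(1)] ij(1) by metis
    moreover have "q k \<noteq> x k" using Flim_proj[OF pqF(2) k(2)] Flim_proj[OF x k(2)] ij(2) by metis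
    moreover have end_k: "x k \<in> Ends (F k)" using end_thread_Ends[OF y k(3)] xy by simp
    moreover have "S \<subseteq> Flim F f" using S topspace_Ftop by simp
    ultimately show "\<exists>U. openin (Ftop F f) U \<and> closedin (Ftop F f) U \<and> x \<in> U \<and> p \<notin> U \<and> q \<notin> U
        \<and> single_exit (Rlim F) S U"
      using Ftop_fibre_clopen[of "x k" F k f] Ends_V Flim_single_exit[OF x] x
      by (intro exI[of _ "{z \<in> Flim F f. z k = x k}"]) blast
  qed
  then show ?thesis unfolding tg_endpoint_def tg_cut_def using x topspace_Ftop by blast
qed

lemma Ftop_open_contains_fibre:
  assumes T: "openin (Ftop F f) T" and z: "z \<in> T"
  obtains k where "{y \<in> Flim F f. y k = z k} \<subseteq> T"
proof -
  obtain T' where T': "openin (product_topology (\<lambda>i. discrete_topology (V (F i))) UNIV) T'"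
    "T = T' \<inter> Flim F f"
    using T unfolding Ftop_def openin_subtopology by blast
  then have zF: "z \<in> Flim F f" "z \<in> T'" using z by auto
  then obtain U where U: "finite {i. U i \<noteq> V (F i)}" "z \<in> Pi\<^sub>E UNIV U" "Pi\<^sub>E UNIV U \<subseteq> T'"
    using T'(1) unfolding openin_product_topology_alt by auto
  obtain k where k: "\<And>i. U i \<noteq> V (F i) \<Longrightarrow> i \<le> k"
    using U(1) finite_nat_set_iff_bounded_le by auto
  have "{y \<in> Flim F f. y k = z k} \<subseteq> T"
  proof
    fix y assume y: "y \<in> {y \<in> Flim F f. y k = z k}"
    have "y i \<in> U i" for i
    proof (cases "U i = V (F i)")
      case True
      then show ?thesis using y unfolding Flim_def by auto
    next
      case False
      then have "i \<le> k" by (rule k)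
      then have "y i = z i" using Flim_proj[of y i k] Flim_proj[OF zF(1), of i k] y by auto
      then show ?thesis using U(2) by (auto simp: PiE_iff)
    qed
    then have "y \<in> Pi\<^sub>E UNIV U" by (simp add: PiE_iff)
    then show "y \<in> T" using U(3) T'(2) y by auto
  qed
  then show thesis by (rule that)
qed

lemma extension_property:
  "is_obj P Y \<Longrightarrow> is_arrow P Y (F n) g \<Longrightarrow>
    \<exists>m\<ge>n. \<exists>h. is_arrow P (F m) Y h \<and> arr_eq (F m) (F n) (comp g h) (f m n)"
  using fraisse unfolding fraisse_seq_def by blast

lemma Ends_cover_vertex:
  assumes v: "v \<in> V (F k)"
  obtains m t where "k \<le> m" "t \<in> Ends (F m)" "pm (f m k) t = v"
proof (cases "ord (F k) v = 1")
  case True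
  then have "v \<in> Ends (F k)" using v unfolding Ends_def by simp
  then show thesis using that[of k v] pm_id v by simp
next
  case False
  then have "3 \<le> ord (F k) v" using obj_F[of k] v unfolding is_obj_def by blast
  then obtain Y h t where Yh: "is_obj P Y" "is_arrow P Y (F k) h" "t \<in> Ends Y" "pm h t = v"
    using ex_arrow_with_endpoint_over[OF obj_F v] by blast
  txt \<open>Factor f m k through h; the embedding part of the factor lifts t to an endpoint of F m.\<close>
  obtain m h' where m: "k \<le> m" "is_arrow P (F m) Y h'" "arr_eq (F m) (F k) (comp h h') (f m k)"
    using extension_property[OF Yh(1,2)] by blast
  have t': "em h' t \<in> Ends (F m)" "pm h' (em h' t) = t"
    using m(2) Yh(3) unfolding is_arrow_def by blast+
  have "pm (f m k) (em h' t) = pm h (pm h' (em h' t))"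
    using m(3) subsetD[OF Ends_V t'(1)] unfolding arr_eq_def comp_def by auto
  then show thesis using that[of m "em h' t"] m(1) t' Yh(4) by simp
qed

lemma Elim_meets_fibre:
  assumes "v \<in> V (F k)"
  obtains y where "y \<in> Elim F f" "y k = v"
proof -
  obtain m t where "k \<le> m" "t \<in> Ends (F m)" "pm (f m k) t = v"
    using Ends_cover_vertex[OF assms] by blast
  then show thesis using that[of "end_thread f m t"] end_thread_below unfolding Elim_eq by blast
qed

lemma Elim_dense: "Ftop F f closure_of Elim F f = topspace (Ftop F f)"
proof -
  have "z \<in> Ftop F f closure_of Elim F f" if z: "z \<in> topspace (Ftop F f)" for z
    unfolding in_closure_of
  proof (intro conjI allI impI)
    show "z \<in> topspace (Ftop F f)" by (fact z)
    fix T assume "z \<in> T \<and> openin (Ftop F f) T"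
    then obtain k where k: "{y \<in> Flim F f. y k = z k} \<subseteq> T"
      using Ftop_open_contains_fibre by blast
    have "z k \<in> V (F k)" using z topspace_Ftop unfolding Flim_def by auto
    then obtain y where "y \<in> Elim F f" "y k = z k" by (rule Elim_meets_fibre)
    then show "\<exists>y. y \<in> Elim F f \<and> y \<in> T" using k Elim_subset_Flim by blast
  qed
  then have "topspace (Ftop F f) \<subseteq> Ftop F f closure_of Elim F f" by (rule subsetI)
  with closure_of_subset_topspace show ?thesis by (rule antisym)
qed

end

theorem mainTheorem5:
  fixes P :: "enat set" and F :: "nat \<Rightarrow> ltree" and f :: "nat \<Rightarrow> nat \<Rightarrow> arrow"
  assumes "\<forall>p\<in>P. 3 \<le> p"
    and "fraisse_seq P F f"
  shows "Elim F f \<subseteq> {x. tg_endpoint (Ftop F f) (Rlim F) x}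
    \<and> (Ftop F f) closure_of (Elim F f) = topspace (Ftop F f)"
proof -
  interpret fraisse_sequence P F f by (rule fraisse_sequence.intro) (fact assms(2))
  show ?thesis using Elim_endpoint Elim_dense by blast
qed

end
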